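(* Let $n\ge2$, $0\le r_l\le r_u<1$, and let $r_0=\frac{(48\sqrt{33}+208)^{1/3}}{6}-\frac{16}{3(48\sqrt{33}+208)^{1/3}}-\frac13\approx 0.2955977425$ (the unique real root of $1-3r-r^2-r^3=0$). For all $x,y\in\mathbb{B}^n$ with $r_l\le|x|\le|y|\le r_u$: if $r_l<r_0$, then $$\frac{1+r_l^2}{2}\,\mathrm{th}\frac{\rho_{\mathbb{B}^n}(x,y)}{2}\le j^*_{\mathbb{B}^n}(x,y)\le \frac{1+r_u}{2}\,\mathrm{th}\frac{\rho_{\mathbb{B}^n}(x,y)}{2};$$ otherwise (if $r_l\ge r_0$), $$\frac{1+r_l}{\sqrt{5+2r_l+r_l^2}}\,\mathrm{th}\frac{\rho_{\mathbb{B}^n}(x,y)}{2}\le j^*_{\mathbb{B}^n}(x,y)\le \frac{1+r_u}{2}\,\mathrm{th}\frac{\rho_{\mathbb{B}^n}(x,y)}{2}.$$ These inequalities have the best possible constants depending only on $r_l$ and $r_u$.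
   Context: $\mathbb{B}^n$ is the unit ball of $\mathbb{R}^n$. For a domain $G\subsetneq\mathbb{R}^n$ and $x\in G$, $d_G(x)=\inf\{|x-z|:z\in\partial G\}$. The hyperbolic metric of the unit ball satisfies $\mathrm{th}\frac{\rho_{\mathbb{B}^n}(x,y)}{2}=\frac{|x-y|}{\sqrt{|x-y|^2+(1-|x|^2)(1-|y|^2)}}$. The $j^*$-metric is $j^*_G(x,y)=\frac{|x-y|}{|x-y|+2\min\{d_G(x),d_G(y)\}}$. *)

theory Defs
  imports "HOL-Analysis.Analysis"
begin

definition unit_ball :: "('a::real_normed_vector) set" where
  "unit_ball = ball 0 1"

definition dist_bd :: "('a::real_normed_vector) set \<Rightarrow> 'a \<Rightarrow> real" where
  "dist_bd G x = infdist x (frontier G)"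

definition jstar :: "('a::real_normed_vector) set \<Rightarrow> 'a \<Rightarrow> 'a \<Rightarrow> real" where
  "jstar G x y = norm (x - y) / (norm (x - y) + 2 * min (dist_bd G x) (dist_bd G y))"

text \<open>Hyperbolic metric of the unit ball, defined so that
  th(rho(x,y)/2) = |x-y| / sqrt(|x-y|^2 + (1-|x|^2)(1-|y|^2)).\<close>
definition rho_ball :: "'a::real_normed_vector \<Rightarrow> 'a \<Rightarrow> real" where
  "rho_ball x y = 2 * artanh (norm (x - y) /
      sqrt ((norm (x - y))\<^sup>2 + (1 - (norm x)\<^sup>2) * (1 - (norm y)\<^sup>2)))"

definition r0 :: real where
  "r0 = root 3 (48 * sqrt 33 + 208) / 6 - 16 / (3 * root 3 (48 * sqrt 33 + 208)) - 1/3"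

definition lower_const :: "real \<Rightarrow> real" where
  "lower_const rl = (if rl < r0 then (1 + rl\<^sup>2) / 2 else (1 + rl) / sqrt (5 + 2 * rl + rl\<^sup>2))"

definition upper_const :: "real \<Rightarrow> real" where
  "upper_const ru = (1 + ru) / 2"

end

theory Submission
  imports Defs
begin

text \<open>
  For \<open>a = |x| \<le> b = |y|\<close> and \<open>t = |x - y|\<close> both sides are explicit:
  \<open>j* = t / (t + 2(1 - b))\<close> and \<open>th(\<rho>/2) = t / sqrt (t\<^sup>2 + (1 - a\<^sup>2)(1 - b\<^sup>2))\<close>,
  so everything reduces to bounding \<open>sqrt (t\<^sup>2 + (1 - a\<^sup>2)(1 - b\<^sup>2)) / (t + 2(1 - b))\<close>
  for \<open>b - a \<le> t \<le> a + b\<close>. The upper bound \<open>(1 + b)/2\<close> is a polynomial inequality.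
  For the lower bound, Cauchy--Schwarz in \<open>t\<close> gives the uniform bound
  \<open>(1 + b) / sqrt ((1 + b)\<^sup>2 + 4)\<close>, increasing in \<open>b\<close>; when the minimising \<open>t\<close>
  is not admissible the minimum sits at \<open>t = a + b\<close>, where the ratio is
  \<open>(1 + ab)/(2 + a - b) \<ge> (1 + r\<^sub>l\<^sup>2)/2\<close>. The two regimes meet exactly at the root
  \<open>r\<^sub>0\<close> of \<open>1 - 3r - r\<^sup>2 - r\<^sup>3\<close>. Sharpness is witnessed by pairs of points on a
  sphere \<open>|x| = |y| = r\<close>.
\<close>

subsection \<open>The metrics in the unit ball\<close>

lemma tanh_artanh_real:
  assumes "-1 < z" "z < (1::real)"
  shows "tanh (artanh z) = z"
proof -
  have "exp (-2 * artanh z) = (1-z)/(1+z)"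
    using assms by (simp add: artanh_def exp_minus exp_ln)
  then have "tanh (artanh z) = (1 - (1-z)/(1+z))/(1+(1-z)/(1+z))"
    by (simp add: tanh_real_altdef)
  also have "\<dots> = z" using assms by (simp add: field_simps)
  finally show ?thesis .
qed

lemma dist_bd_unit_ball:
  fixes x :: "'a::euclidean_space"
  assumes "norm x < 1"
  shows "dist_bd unit_ball x = 1 - norm x"
proof -
  obtain u :: 'a where u: "norm u = 1" using vector_choose_size[of 1] by auto
  define z where "z = (if x = 0 then u else x /\<^sub>R norm x)"
  have z: "z \<in> sphere 0 1" using u by (auto simp: z_def)
  have "dist x z = 1 - norm x"
  proof (cases "x = 0")
    case False
    have "x - x /\<^sub>R norm x = (1 - 1 / norm x) *\<^sub>R x"
      by (simp add: algebra_simps inverse_eq_divide)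
    then have "dist x z = \<bar>1 - 1/norm x\<bar> * norm x"
      using False by (simp add: z_def dist_norm divide_inverse)
    also have "\<dots> = 1 - norm x" using False assms by (simp add: abs_if field_simps)
    finally show ?thesis .
  qed (use u in \<open>simp add: z_def dist_norm\<close>)
  then have le: "infdist x (sphere 0 1) \<le> 1 - norm x" by (intro infdist_le2[OF z]) simp
  have ne: "sphere (0::'a) 1 \<noteq> {}" using z by blast
  have ge: "1 - norm x \<le> infdist x (sphere 0 1)"
    unfolding infdist_notempty[OF ne]
  proof (rule cINF_greatest[OF ne])
    fix w :: 'a assume "w \<in> sphere 0 1"
    then show "1 - norm x \<le> dist x w"
      using norm_triangle_ineq2[of w x] by (simp add: dist_norm norm_minus_commute)
  qed
  show ?thesis using le ge by (simp add: dist_bd_def unit_ball_def)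
qed

lemma jstar_unit_ball_eq:
  fixes x y :: "'a::euclidean_space"
  assumes "norm x \<le> norm y" "norm y < 1"
  shows "jstar unit_ball x y = norm (x - y) / (norm (x - y) + 2 * (1 - norm y))"
  using assms by (simp add: jstar_def dist_bd_unit_ball min_def)

lemma tanh_half_rho_ball_eq:
  fixes x y :: "'a::real_normed_vector"
  assumes "norm x < 1" "norm y < 1"
  shows "tanh (rho_ball x y / 2) =
    norm (x - y) / sqrt ((norm (x - y))\<^sup>2 + (1 - (norm x)\<^sup>2) * (1 - (norm y)\<^sup>2))"
proof -
  define t where "t = norm (x - y)"
  define P where "P = (1 - (norm x)\<^sup>2) * (1 - (norm y)\<^sup>2)"
  have P: "0 < P" using assms by (simp add: P_def abs_square_less_1)
  have t: "0 \<le> t" by (simp add: t_def)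
  have S: "0 < sqrt (t\<^sup>2 + P)" using P by (simp add: add_nonneg_pos)
  have "t < sqrt (t\<^sup>2 + P)"
    using real_sqrt_less_mono[of "t\<^sup>2" "t\<^sup>2 + P"] P t by simp
  then have "t / sqrt (t\<^sup>2 + P) < 1" using S by simp
  moreover have "0 \<le> t / sqrt (t\<^sup>2 + P)" using S t by simp
  ultimately show ?thesis
    unfolding rho_ball_def t_def[symmetric] P_def[symmetric]
    using tanh_artanh_real[of "t / sqrt (t\<^sup>2 + P)"] by simp
qed

lemma norm_two_axes:
  assumes "i \<noteq> j"
  shows "norm (p *\<^sub>R axis i 1 + q *\<^sub>R axis j 1 :: real^'n) = sqrt (p\<^sup>2 + q\<^sup>2)"
proof -
  have "(norm (p *\<^sub>R axis i 1 + q *\<^sub>R axis j 1 :: real^'n))\<^sup>2 = p\<^sup>2 + q\<^sup>2"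
    unfolding power2_norm_eq_inner using assms
    by (simp add: inner_add_left inner_add_right inner_axis_axis power2_eq_square)
  then show ?thesis by (metis norm_ge_zero real_sqrt_abs abs_of_nonneg)
qed

lemma exists_sphere_pair_dist:
  assumes "CARD('n::finite) \<ge> 2" "0 < r" "0 \<le> t" "t \<le> 2 * r"
  obtains x y :: "real^'n" where "norm x = r" "norm y = r" "norm (x - y) = t"
proof -
  obtain i :: 'n where True by simp
  have "\<exists>j :: 'n. i \<noteq> j"
  proof (rule ccontr)
    assume "\<nexists>j :: 'n. i \<noteq> j"
    then have "UNIV = {i}" by auto
    then have "CARD('n) = card {i}" by (simp only:)
    with assms(1) show False by simp
  qed
  then obtain j where ij: "i \<noteq> j" ..
  define u where "u = r - t\<^sup>2 / (2 * r)"
  define v where "v = sqrt (r\<^sup>2 - u\<^sup>2)"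
  have "t\<^sup>2 \<le> (2 * r)\<^sup>2" using assms by (intro power_mono) auto
  then have "t\<^sup>2 / (2 * r) \<le> 2 * r" using assms by (simp add: divide_le_eq power2_eq_square)
  then have "\<bar>u\<bar> \<le> r" using assms by (simp add: u_def abs_le_iff)
  then have "u\<^sup>2 \<le> r\<^sup>2" using abs_le_square_iff[of u r] assms by simp
  then have v2: "v\<^sup>2 = r\<^sup>2 - u\<^sup>2" by (simp add: v_def)
  define x :: "real^'n" where "x = r *\<^sub>R axis i 1 + 0 *\<^sub>R axis j 1"
  define y :: "real^'n" where "y = u *\<^sub>R axis i 1 + v *\<^sub>R axis j 1"
  have "x - y = (r - u) *\<^sub>R axis i 1 + (- v) *\<^sub>R axis j 1"
    by (simp add: x_def y_def algebra_simps)
  then have "norm (x - y) = sqrt ((r - u)\<^sup>2 + (- v)\<^sup>2)" by (simp only: norm_two_axes[OF ij])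
  also have "(r - u)\<^sup>2 + (- v)\<^sup>2 = t\<^sup>2"
    unfolding power2_minus v2 u_def using assms by (simp add: field_simps power2_eq_square)
  finally have "norm (x - y) = t" using assms by simp
  moreover have "norm x = r" "norm y = r"
    unfolding x_def y_def norm_two_axes[OF ij] v2 using assms by simp_all
  ultimately show ?thesis using that by blast
qed

lemma jstar_tanh_sphere_pair:
  assumes "CARD('n::finite) \<ge> 2" "0 < r" "r < 1" "0 \<le> t" "t \<le> 2 * r"
  obtains x y :: "real^'n" where "norm x = r" "norm y = r" "x \<in> unit_ball" "y \<in> unit_ball"
    "jstar unit_ball x y = t / (t + 2 * (1 - r))"
    "tanh (rho_ball x y / 2) = t / sqrt (t\<^sup>2 + (1 - r\<^sup>2)\<^sup>2)"
proof -
  obtain x y :: "real^'n" where h: "norm x = r" "norm y = r" "norm (x - y) = t"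
    using exists_sphere_pair_dist[OF assms(1,2,4,5)] .
  show ?thesis
  proof (rule that)
    show "x \<in> unit_ball" "y \<in> unit_ball" using h assms by (auto simp: unit_ball_def)
    show "jstar unit_ball x y = t / (t + 2 * (1 - r))"
      using jstar_unit_ball_eq[of x y] h assms by simp
    show "tanh (rho_ball x y / 2) = t / sqrt (t\<^sup>2 + (1 - r\<^sup>2)\<^sup>2)"
      using tanh_half_rho_ball_eq[of x y] h assms by (simp add: power2_eq_square)
  qed (use h in auto)
qed

subsection \<open>The threshold \<open>r\<^sub>0\<close>\<close>

lemma r0_cubic: "1 - 3 * r0 - r0\<^sup>2 - r0^3 = 0"
proof -
  define K where "K = 48 * sqrt 33 + 208"
  define u where "u = root 3 K"
  have K: "0 < K" by (simp add: K_def add_nonneg_pos)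
  then have u: "0 < u" "u^3 = K" by (simp_all add: u_def real_root_pow_pos)
  have "K\<^sup>2 = 416 * K + 32768" by (simp add: K_def algebra_simps power2_eq_square)
  then have "u^3 * u^3 - 416 * u^3 - 32768 = 0" using u by (simp add: power2_eq_square)
  moreover have "r0 = u/6 - 16/(3*u) - 1/3" by (simp add: r0_def u_def K_def)
  then have "1 - 3 * r0 - r0\<^sup>2 - r0^3 = - (u^3 * u^3 - 416 * u^3 - 32768) / (216 * u^3)"
    using u(1) unfolding \<open>r0 = _\<close> by (simp add: field_simps power2_eq_square power3_eq_cube)
  ultimately show ?thesis by simp
qed

lemma decreasing_cubic_less_iff:
  fixes x y :: real
  shows "1 - 3*y - y\<^sup>2 - y^3 < 1 - 3*x - x\<^sup>2 - x^3 \<longleftrightarrow> x < y"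
proof -
  define Q where "Q = 3 + (x + y) + (x\<^sup>2 + x*y + y\<^sup>2)"
  have "2 * Q = (x + y + 1)\<^sup>2 + x\<^sup>2 + y\<^sup>2 + 5"
    by (simp add: Q_def algebra_simps power2_eq_square)
  then have Q: "0 < Q" by (smt (verit) zero_le_power2)
  have "(1 - 3*x - x\<^sup>2 - x^3) - (1 - 3*y - y\<^sup>2 - y^3) = (y - x) * Q"
    by (simp add: Q_def algebra_simps power2_eq_square power3_eq_cube)
  then have "1 - 3*y - y\<^sup>2 - y^3 < 1 - 3*x - x\<^sup>2 - x^3 \<longleftrightarrow> 0 < (y - x) * Q" by linarith
  also have "\<dots> \<longleftrightarrow> x < y" using Q by (simp add: zero_less_mult_iff)
  finally show ?thesis .
qed

lemma r0_less_iff: "r0 < x \<longleftrightarrow> 1 - 3*x - x\<^sup>2 - x^3 < 0"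
  using decreasing_cubic_less_iff[of x r0, unfolded r0_cubic] by (rule sym)

lemma r0_le_iff: "r0 \<le> x \<longleftrightarrow> 1 - 3*x - x\<^sup>2 - x^3 \<le> 0"
  using decreasing_cubic_less_iff[of r0 x, unfolded r0_cubic] by (metis not_less)

lemma r0_pos: "0 < r0"
  using r0_le_iff[of 0] by simp

text \<open>Since \<open>(1 + r)\<^sup>2 + 4 = 5 + 2r + r\<^sup>2\<close>, this says that the two branches of
  \<^const>\<open>lower_const\<close> agree at \<open>r\<^sub>0\<close>.\<close>

lemma r0_constants_agree: "((1 + r0\<^sup>2) / 2)\<^sup>2 * ((1 + r0)\<^sup>2 + 4) = (1 + r0)\<^sup>2"
proof -
  have "(1 + r0\<^sup>2)\<^sup>2 * ((1 + r0)\<^sup>2 + 4) - 4 * (1 + r0)\<^sup>2 = (1 - 3*r0 - r0\<^sup>2 - r0^3)\<^sup>2"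
    by (simp add: algebra_simps power2_eq_square power3_eq_cube)
  then show ?thesis using r0_cubic by (simp add: power_divide)
qed

subsection \<open>Bounds for the ratio \<open>sqrt (t\<^sup>2 + (1 - a\<^sup>2)(1 - b\<^sup>2)) / (t + 2(1 - b))\<close>\<close>

lemma ratio_upper_bound:
  fixes a b t :: real
  assumes "0 \<le> a" "a \<le> b" "b < 1" "b - a \<le> t" "t \<le> a + b"
  shows "2 * sqrt (t\<^sup>2 + (1 - a\<^sup>2) * (1 - b\<^sup>2)) \<le> (1 + b) * (t + 2 * (1 - b))"
proof -
  have lin: "(b\<^sup>2 - a\<^sup>2) * (3*b + 1) \<le> t * (2*b\<^sup>2 + 2*b + 4)"
  proof -
    have "(b\<^sup>2 - a\<^sup>2) * (3*b + 1) = (b - a) * ((b + a) * (3*b + 1))"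
      by (simp add: algebra_simps power2_eq_square)
    also have "\<dots> \<le> (b - a) * (2*b * (3*b + 1))"
      using assms by (intro mult_left_mono mult_right_mono) auto
    also have "\<dots> \<le> (b - a) * (2*b\<^sup>2 + 2*b + 4)"
    proof -
      have "b\<^sup>2 \<le> 1" using assms by (simp add: abs_square_le_1)
      moreover have "2*b * (3*b + 1) = 2*b\<^sup>2 + 2*b + 4 - 4 * (1 - b\<^sup>2)"
        by (simp add: algebra_simps power2_eq_square)
      ultimately show ?thesis using assms by (intro mult_left_mono) auto
    qed
    also have "\<dots> \<le> t * (2*b\<^sup>2 + 2*b + 4)"
      using assms by (intro mult_right_mono) auto
    finally show ?thesis .
  qed
  have "((1 + b) * (t + 2*(1 - b)))\<^sup>2 - 4 * (t\<^sup>2 + (1 - a\<^sup>2) * (1 - b\<^sup>2))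
      = (1 - b) * ((b + 3) * (t - (b - a)) * (a + b - t)
                   + (t * (2*b\<^sup>2 + 2*b + 4) - (b\<^sup>2 - a\<^sup>2) * (3*b + 1)))"
    by (simp add: algebra_simps power2_eq_square power3_eq_cube)
  also have "\<dots> \<ge> 0" using assms lin by (intro mult_nonneg_nonneg add_nonneg_nonneg) auto
  finally have "t\<^sup>2 + (1 - a\<^sup>2) * (1 - b\<^sup>2) \<le> ((1 + b) * (t + 2*(1 - b)) / 2)\<^sup>2"
    by (simp add: power_divide)
  then have "sqrt (t\<^sup>2 + (1 - a\<^sup>2) * (1 - b\<^sup>2)) \<le> (1 + b) * (t + 2*(1 - b)) / 2"
    using assms by (intro real_le_lsqrt) auto
  then show ?thesis by simp
qed

text \<open>Cauchy--Schwarz: \<open>(t + d)\<^sup>2 P \<le> (t\<^sup>2 + P)(P + d\<^sup>2)\<close>, and \<open>P \<ge> (1 - b\<^sup>2)\<^sup>2\<close>.\<close>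

lemma ratio_lower_bound_uniform:
  fixes a b t L :: real
  assumes "0 \<le> a" "a \<le> b" "b < 1" "0 \<le> t" "0 \<le> L"
    and L: "L\<^sup>2 * ((1 + b)\<^sup>2 + 4) \<le> (1 + b)\<^sup>2"
  shows "L * (t + 2 * (1 - b)) \<le> sqrt (t\<^sup>2 + (1 - a\<^sup>2) * (1 - b\<^sup>2))"
proof -
  define P where "P = (1 - a\<^sup>2) * (1 - b\<^sup>2)"
  define d where "d = 2 * (1 - b)"
  have d: "0 < d" using assms by (simp add: d_def)
  have b2: "b\<^sup>2 < 1" using assms by (simp add: abs_square_less_1)
  have P: "(1 - b\<^sup>2)\<^sup>2 \<le> P"
    unfolding P_def power2_eq_square[of "1 - b\<^sup>2"] using assms b2
    by (intro mult_right_mono) (auto intro: power_mono)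
  have "L\<^sup>2 * ((1 + b)\<^sup>2 + 4) \<le> 1 * ((1 + b)\<^sup>2 + 4)" using L by simp
  then have L1: "L\<^sup>2 \<le> 1" by (simp add: add_nonneg_pos)
  have "L\<^sup>2 * ((1 - b\<^sup>2)\<^sup>2 + d\<^sup>2) = (1 - b)\<^sup>2 * (L\<^sup>2 * ((1 + b)\<^sup>2 + 4))"
    by (simp add: d_def algebra_simps power2_eq_square)
  also have "\<dots> \<le> ((1 - b) * (1 + b))\<^sup>2"
    unfolding power_mult_distrib using L by (intro mult_left_mono) auto
  also have "\<dots> = (1 - b\<^sup>2)\<^sup>2" by (simp add: algebra_simps power2_eq_square)
  finally have "L\<^sup>2 * ((1 - b\<^sup>2)\<^sup>2 + d\<^sup>2) \<le> (1 - b\<^sup>2)\<^sup>2" .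
  moreover have "L\<^sup>2 * (P - (1 - b\<^sup>2)\<^sup>2) \<le> P - (1 - b\<^sup>2)\<^sup>2"
    using L1 P by (intro mult_left_le_one_le) auto
  ultimately have LP: "L\<^sup>2 * (P + d\<^sup>2) \<le> P" by (simp add: algebra_simps)
  have CS: "P * (t + d)\<^sup>2 \<le> (t\<^sup>2 + P) * (P + d\<^sup>2)"
  proof -
    have "(t\<^sup>2 + P) * (P + d\<^sup>2) - P * (t + d)\<^sup>2 = (t*d - P)\<^sup>2"
      by (simp add: algebra_simps power2_eq_square)
    then show ?thesis by (metis diff_ge_0_iff_ge zero_le_power2)
  qed
  have "(L * (t + d))\<^sup>2 * (P + d\<^sup>2) = L\<^sup>2 * (P + d\<^sup>2) * (t + d)\<^sup>2"
    by (simp add: power_mult_distrib mult_ac)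
  also have "\<dots> \<le> P * (t + d)\<^sup>2" using LP by (rule mult_right_mono) simp
  also have "\<dots> \<le> (t\<^sup>2 + P) * (P + d\<^sup>2)" by (rule CS)
  finally have "(L * (t + d))\<^sup>2 * (P + d\<^sup>2) \<le> (t\<^sup>2 + P) * (P + d\<^sup>2)" .
  moreover have "0 < P + d\<^sup>2" using P d by (smt (verit) zero_le_power2 zero_less_power)
  ultimately have "(L * (t + d))\<^sup>2 \<le> t\<^sup>2 + P" by simp
  then show ?thesis unfolding P_def d_def by (rule real_le_rsqrt)
qed

lemma uniform_bound_mono:
  fixes M r b :: real
  assumes "0 \<le> 1 + r" "r \<le> b" "M * ((1 + r)\<^sup>2 + 4) \<le> (1 + r)\<^sup>2"
  shows "M * ((1 + b)\<^sup>2 + 4) \<le> (1 + b)\<^sup>2"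
proof -
  have pos: "0 < (1 + r)\<^sup>2 + 4" by (simp add: add_nonneg_pos)
  have "(1 + r)\<^sup>2 \<le> (1 + b)\<^sup>2" using assms by (intro power_mono) auto
  then have "M * ((1 + b)\<^sup>2 + 4) * ((1 + r)\<^sup>2 + 4) \<le> (1 + b)\<^sup>2 * ((1 + r)\<^sup>2 + 4)"
    using mult_right_mono[OF assms(3), of "(1 + b)\<^sup>2 + 4"]
    by (simp add: algebra_simps add_nonneg_nonneg)
  then show ?thesis using pos by simp
qed

text \<open>The ratio decreases in \<open>t\<close> on \<open>[b - a, a + b]\<close> when \<open>2(a + b) \<le> (1 - a\<^sup>2)(1 + b)\<close>,
  so its minimum is the value \<open>(1 + ab)/(2 + a - b)\<close> at the diameter \<open>t = a + b\<close>.\<close>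

lemma ratio_lower_bound_diameter:
  fixes a b t rl :: real
  assumes "0 \<le> rl" "rl \<le> a" "a \<le> b" "b < 1" "0 \<le> t" "t \<le> a + b"
    and H: "2 * (a + b) \<le> (1 - a\<^sup>2) * (1 + b)"
  shows "(1 + rl\<^sup>2) / 2 * (t + 2 * (1 - b)) \<le> sqrt (t\<^sup>2 + (1 - a\<^sup>2) * (1 - b\<^sup>2))"
proof -
  define L where "L = (1 + rl\<^sup>2) / 2"
  define P where "P = (1 - a\<^sup>2) * (1 - b\<^sup>2)"
  define d where "d = 2 * (1 - b)"
  define s where "s = a + b"
  have d: "0 < d" using assms by (simp add: d_def)
  have dsP: "d * s \<le> P"
    using mult_left_mono[OF H, of "1 - b"] assms
    by (simp add: d_def s_def P_def algebra_simps power2_eq_square)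
  have P: "0 \<le> P" using dsP d assms by (smt (verit) mult_nonneg_nonneg s_def)
  have mono: "(s\<^sup>2 + P) * (t + d)\<^sup>2 \<le> (t\<^sup>2 + P) * (s + d)\<^sup>2"
  proof -
    have "d\<^sup>2 * (s + t) \<le> 2 * d * P"
    proof -
      have "d\<^sup>2 * (s + t) \<le> 2 * d * (d * s)"
        using assms d by (simp add: s_def power2_eq_square mult_left_mono)
      also have "\<dots> \<le> 2 * d * P" using dsP d by simp
      finally show ?thesis .
    qed
    moreover have "d * s * t \<le> P * t" using dsP assms by (intro mult_right_mono) auto
    moreover have "0 \<le> P * (s - t)" using P assms by (simp add: s_def)
    ultimately have "0 \<le> (P - d\<^sup>2) * (s + t) + 2 * d * (P - s * t)"
      by (simp add: algebra_simps power2_eq_square)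
    moreover have "(t\<^sup>2 + P) * (s + d)\<^sup>2 - (s\<^sup>2 + P) * (t + d)\<^sup>2
        = (s - t) * ((P - d\<^sup>2) * (s + t) + 2 * d * (P - s * t))"
      by (simp add: algebra_simps power2_eq_square)
    ultimately show ?thesis using assms by (smt (verit) mult_nonneg_nonneg s_def)
  qed
  have "(1 + rl\<^sup>2) * (2 + a - b) \<le> 2 * (1 + a * b)"
  proof -
    have "(1 + rl\<^sup>2) * (2 + a - b) \<le> (1 + rl\<^sup>2) * 2" using assms by (intro mult_left_mono) auto
    moreover have "rl\<^sup>2 \<le> a\<^sup>2" using assms by (intro power_mono) auto
    moreover have "a\<^sup>2 \<le> a * b" using assms by (simp add: power2_eq_square mult_left_mono)
    ultimately show ?thesis by (simp add: algebra_simps)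
  qed
  moreover have "L * (s + d) = (1 + rl\<^sup>2) * (2 + a - b) / 2"
    by (simp add: L_def s_def d_def algebra_simps)
  ultimately have "L * (s + d) \<le> 1 + a * b" by simp
  then have "(L * (s + d))\<^sup>2 \<le> (1 + a * b)\<^sup>2"
    using assms d by (intro power_mono) (auto simp: L_def s_def)
  also have "(1 + a * b)\<^sup>2 = s\<^sup>2 + P" by (simp add: s_def P_def algebra_simps power2_eq_square)
  finally have Ls: "L\<^sup>2 * (s + d)\<^sup>2 \<le> s\<^sup>2 + P" by (simp add: power_mult_distrib)
  have "(L * (t + d))\<^sup>2 * (s + d)\<^sup>2 = L\<^sup>2 * (s + d)\<^sup>2 * (t + d)\<^sup>2"
    by (simp add: power_mult_distrib mult_ac)
  also have "\<dots> \<le> (s\<^sup>2 + P) * (t + d)\<^sup>2" using Ls by (rule mult_right_mono) simp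
  also have "\<dots> \<le> (t\<^sup>2 + P) * (s + d)\<^sup>2" by (rule mono)
  finally have "(L * (t + d))\<^sup>2 * (s + d)\<^sup>2 \<le> (t\<^sup>2 + P) * (s + d)\<^sup>2" .
  moreover have "0 < (s + d)\<^sup>2" using assms by (simp add: s_def d_def)
  ultimately have "(L * (t + d))\<^sup>2 \<le> t\<^sup>2 + P" by simp
  then show ?thesis unfolding L_def P_def d_def by (rule real_le_rsqrt)
qed

lemma ratio_lower_bound:
  fixes a b t rl :: real
  assumes "0 \<le> rl" "rl \<le> a" "a \<le> b" "b < 1" "b - a \<le> t" "t \<le> a + b"
  shows "lower_const rl * (t + 2 * (1 - b)) \<le> sqrt (t\<^sup>2 + (1 - a\<^sup>2) * (1 - b\<^sup>2))"
proof (cases "rl < r0")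
  case small: True
  show ?thesis
  proof (cases "2 * (a + b) \<le> (1 - a\<^sup>2) * (1 + b)")
    case True
    then show ?thesis
      using small assms ratio_lower_bound_diameter[of rl a b t] by (simp add: lower_const_def)
  next
    case False
    have "(1 - b\<^sup>2) * (1 + b) \<le> (1 - a\<^sup>2) * (1 + b)"
      using assms by (intro mult_right_mono power_mono) auto
    then have "1 - 3*b - b\<^sup>2 - b^3 < 0"
      using False assms by (simp add: algebra_simps power2_eq_square power3_eq_cube)
    then have "r0 < b" by (simp add: r0_less_iff)
    have "((1 + rl\<^sup>2) / 2)\<^sup>2 \<le> ((1 + r0\<^sup>2) / 2)\<^sup>2"
      using small assms by (intro power_mono) (auto intro: power_mono)
    then have "((1 + rl\<^sup>2) / 2)\<^sup>2 * ((1 + r0)\<^sup>2 + 4) \<le> (1 + r0)\<^sup>2"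
      using r0_constants_agree by (smt (verit) mult_right_mono zero_le_power2)
    then have "((1 + rl\<^sup>2) / 2)\<^sup>2 * ((1 + b)\<^sup>2 + 4) \<le> (1 + b)\<^sup>2"
      using uniform_bound_mono \<open>r0 < b\<close> small assms by (smt (verit))
    then show ?thesis
      using small assms ratio_lower_bound_uniform[of a b t "(1 + rl\<^sup>2) / 2"]
      by (simp add: lower_const_def)
  qed
next
  case False
  have L: "lower_const rl = (1 + rl) / sqrt ((1 + rl)\<^sup>2 + 4)"
    using False by (simp add: lower_const_def algebra_simps power2_eq_square)
  have "0 < (1 + rl)\<^sup>2 + 4" by (simp add: add_nonneg_pos)
  then have "(lower_const rl)\<^sup>2 * ((1 + rl)\<^sup>2 + 4) = (1 + rl)\<^sup>2"
    unfolding L by (simp add: power_divide)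
  then have "(lower_const rl)\<^sup>2 * ((1 + b)\<^sup>2 + 4) \<le> (1 + b)\<^sup>2"
    using uniform_bound_mono[of rl b] assms by auto
  then show ?thesis
    using ratio_lower_bound_uniform[of a b t "lower_const rl"] assms by (simp add: L)
qed

subsection \<open>The inequalities and their sharpness\<close>

lemma jstar_tanh_bounds:
  fixes x y :: "'a::euclidean_space"
  assumes "0 \<le> rl" "x \<in> unit_ball" "y \<in> unit_ball"
    and "rl \<le> norm x" "norm x \<le> norm y" "norm y \<le> ru"
  shows "lower_const rl * tanh (rho_ball x y / 2) \<le> jstar unit_ball x y"
    and "jstar unit_ball x y \<le> upper_const ru * tanh (rho_ball x y / 2)"
proof -
  define a where "a = norm x"
  define b where "b = norm y"
  define t where "t = norm (x - y)"
  define S where "S = sqrt (t\<^sup>2 + (1 - a\<^sup>2) * (1 - b\<^sup>2))"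
  define D where "D = t + 2 * (1 - b)"
  have ab: "rl \<le> a" "a \<le> b" "b \<le> ru" "b < 1" "0 \<le> a"
    using assms by (auto simp: a_def b_def unit_ball_def)
  have tb: "b - a \<le> t" "t \<le> a + b"
    using norm_triangle_ineq2[of y x] norm_triangle_ineq4[of x y]
    by (auto simp: a_def b_def t_def norm_minus_commute)
  have J: "jstar unit_ball x y = t / D"
    using jstar_unit_ball_eq[of x y] ab by (simp add: a_def b_def t_def D_def)
  have T: "tanh (rho_ball x y / 2) = t / S"
    using tanh_half_rho_ball_eq[of x y] ab by (simp add: a_def b_def t_def S_def)
  have "(1 - a\<^sup>2) * (1 - b\<^sup>2) > 0" using ab by (simp add: abs_square_less_1)
  then have S: "0 < S" by (simp add: S_def add_nonneg_pos)
  have D: "0 < D" using ab tb by (simp add: D_def)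
  have "lower_const rl * D \<le> S"
    using ratio_lower_bound[of rl a b t] assms ab tb by (simp add: S_def D_def)
  then show "lower_const rl * tanh (rho_ball x y / 2) \<le> jstar unit_ball x y"
    using S D tb ab by (cases "t = 0") (simp_all add: J T field_simps)
  have "2 * S \<le> (1 + ru) * D"
    using ratio_upper_bound[of a b t] ab tb mult_right_mono[of b ru D] D
    by (simp add: S_def D_def algebra_simps)
  then have "t * (2 * S) \<le> t * ((1 + ru) * D)" using tb ab by (intro mult_left_mono) auto
  then show "jstar unit_ball x y \<le> upper_const ru * tanh (rho_ball x y / 2)"
    using S D by (simp add: J T upper_const_def field_simps)
qed

lemma jstar_less_on_sphere:
  assumes "CARD('n::finite) \<ge> 2" "0 < r" "r < 1" "0 < t" "t \<le> 2 * r"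
    and "sqrt (t\<^sup>2 + (1 - r\<^sup>2)\<^sup>2) \<le> k * (t + 2 * (1 - r))" "k < c"
  obtains x y :: "real^'n" where "norm x = r" "norm y = r" "x \<in> unit_ball" "y \<in> unit_ball"
    "jstar unit_ball x y < c * tanh (rho_ball x y / 2)"
proof -
  obtain x y :: "real^'n" where xy: "norm x = r" "norm y = r" "x \<in> unit_ball" "y \<in> unit_ball"
    and J: "jstar unit_ball x y = t / (t + 2 * (1 - r))"
    and T: "tanh (rho_ball x y / 2) = t / sqrt (t\<^sup>2 + (1 - r\<^sup>2)\<^sup>2)"
    using jstar_tanh_sphere_pair[OF assms(1-3), of t] assms by auto
  have "r\<^sup>2 < 1" using assms by (simp add: abs_square_less_1)
  then have "0 < (1 - r\<^sup>2)\<^sup>2" by simp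
  then have S: "0 < sqrt (t\<^sup>2 + (1 - r\<^sup>2)\<^sup>2)" by (simp add: add_nonneg_pos)
  have "t * sqrt (t\<^sup>2 + (1 - r\<^sup>2)\<^sup>2) \<le> t * (k * (t + 2 * (1 - r)))"
    using assms by (intro mult_left_mono) auto
  then have "t / (t + 2 * (1 - r)) \<le> k * (t / sqrt (t\<^sup>2 + (1 - r\<^sup>2)\<^sup>2))"
    using assms S by (simp add: field_simps)
  also have "\<dots> < c * (t / sqrt (t\<^sup>2 + (1 - r\<^sup>2)\<^sup>2))"
    using assms S by (intro mult_strict_right_mono) auto
  finally show ?thesis using that xy J T by simp
qed

lemma jstar_greater_on_sphere:
  assumes "CARD('n::finite) \<ge> 2" "0 < r" "r < 1" "0 < t" "t \<le> 2 * r"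
    and "c * (t + 2 * (1 - r)) < 1 - r\<^sup>2"
  obtains x y :: "real^'n" where "norm x = r" "norm y = r" "x \<in> unit_ball" "y \<in> unit_ball"
    "c * tanh (rho_ball x y / 2) < jstar unit_ball x y"
proof -
  obtain x y :: "real^'n" where xy: "norm x = r" "norm y = r" "x \<in> unit_ball" "y \<in> unit_ball"
    and J: "jstar unit_ball x y = t / (t + 2 * (1 - r))"
    and T: "tanh (rho_ball x y / 2) = t / sqrt (t\<^sup>2 + (1 - r\<^sup>2)\<^sup>2)"
    using jstar_tanh_sphere_pair[OF assms(1-3), of t] assms by auto
  have r2: "0 < 1 - r\<^sup>2" using assms by (simp add: abs_square_less_1)
  have "1 - r\<^sup>2 \<le> sqrt (t\<^sup>2 + (1 - r\<^sup>2)\<^sup>2)" using r2 by (intro real_le_rsqrt) simp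
  then have "c * (t + 2 * (1 - r)) < sqrt (t\<^sup>2 + (1 - r\<^sup>2)\<^sup>2)" using assms by linarith
  then have "t * (c * (t + 2 * (1 - r))) < t * sqrt (t\<^sup>2 + (1 - r\<^sup>2)\<^sup>2)"
    using assms by (intro mult_strict_left_mono) auto
  then have "c * (t / sqrt (t\<^sup>2 + (1 - r\<^sup>2)\<^sup>2)) < t / (t + 2 * (1 - r))"
    using assms r2 by (simp add: field_simps add_nonneg_pos)
  then show ?thesis using that xy J T by simp
qed

text \<open>Below \<open>r\<^sub>0\<close> the extremal pairs are antipodal, \<open>t = 2r\<close>, where the ratio is
  \<open>(1 + r\<^sup>2)/2\<close> (for \<open>r\<^sub>l = 0\<close> there is no such pair with \<open>r = 0\<close>, so we let \<open>r \<rightarrow> 0\<close>); above \<open>r\<^sub>0\<close> they sit at \<open>|x| = |y| = r\<^sub>l\<close>, \<open>t = (1 - r\<^sub>l)(1 + r\<^sub>l)\<^sup>2/2\<close>,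
  the minimiser of the Cauchy--Schwarz bound.\<close>

lemma lower_const_sharp:
  assumes "CARD('n::finite) \<ge> 2" "0 \<le> rl" "rl \<le> ru" "ru < 1" "0 < ru" "lower_const rl < c"
  shows "\<exists>x y :: real^'n. x \<in> unit_ball \<and> y \<in> unit_ball \<and>
           rl \<le> norm x \<and> norm x \<le> norm y \<and> norm y \<le> ru \<and>
           jstar unit_ball x y < c * tanh (rho_ball x y / 2)"
proof (cases "rl < r0")
  case True
  then have c: "(1 + rl\<^sup>2) / 2 < c" using assms by (simp add: lower_const_def)
  define e where "e = (if 0 < rl then rl else min ru (c - 1/2))"
  have e: "rl \<le> e" "e \<le> ru" "0 < e" "(1 + e\<^sup>2) / 2 < c"
  proof -
    show "rl \<le> e" "e \<le> ru" "0 < e" using assms c by (auto simp: e_def)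
    show "(1 + e\<^sup>2) / 2 < c"
    proof (cases "0 < rl")
      case False
      then have "e < 1" "e \<le> c - 1/2" "rl = 0" using assms by (auto simp: e_def)
      moreover have "e\<^sup>2 < e" using \<open>e < 1\<close> \<open>0 < e\<close> by (simp add: power2_eq_square)
      ultimately show ?thesis using c by simp
    qed (use c in \<open>simp add: e_def\<close>)
  qed
  have "sqrt ((2 * e)\<^sup>2 + (1 - e\<^sup>2)\<^sup>2) = (1 + e\<^sup>2) / 2 * (2 * e + 2 * (1 - e))"
    by (rule real_sqrt_unique) (auto simp: algebra_simps power2_eq_square)
  then obtain x y :: "real^'n" where "norm x = e" "norm y = e" "x \<in> unit_ball" "y \<in> unit_ball"
      "jstar unit_ball x y < c * tanh (rho_ball x y / 2)"
    using jstar_less_on_sphere[OF assms(1), of e "2 * e" "(1 + e\<^sup>2) / 2" c] e assms by auto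
  then show ?thesis using e by (intro exI[of _ x] exI[of _ y]) auto
next
  case False
  then have rl: "0 < rl" "rl < 1" "1 - 3*rl - rl\<^sup>2 - rl^3 \<le> 0"
    using assms r0_pos r0_le_iff[of rl] by (auto simp: not_less)
  define t where "t = (1 - rl) * (1 + rl)\<^sup>2 / 2"
  have "0 < t" unfolding t_def using rl by (intro divide_pos_pos mult_pos_pos) auto
  moreover have "t \<le> 2 * rl"
    using rl by (simp add: t_def algebra_simps power2_eq_square power3_eq_cube)
  ultimately have t: "0 < t" "t \<le> 2 * rl" by simp_all
  have pos: "0 < 5 + 2*rl + rl\<^sup>2" using rl by (simp add: add_pos_nonneg)
  have "t\<^sup>2 + (1 - rl\<^sup>2)\<^sup>2 = (lower_const rl * (t + 2 * (1 - rl)))\<^sup>2"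
    using False pos by (simp add: lower_const_def t_def power_divide field_simps power2_eq_square)
  moreover have "0 \<le> lower_const rl * (t + 2 * (1 - rl))"
    using False pos rl t by (simp add: lower_const_def)
  ultimately have "sqrt (t\<^sup>2 + (1 - rl\<^sup>2)\<^sup>2) = lower_const rl * (t + 2 * (1 - rl))" by simp
  then obtain x y :: "real^'n" where "norm x = rl" "norm y = rl" "x \<in> unit_ball" "y \<in> unit_ball"
      "jstar unit_ball x y < c * tanh (rho_ball x y / 2)"
    using jstar_less_on_sphere[OF assms(1) rl(1,2) t, of "lower_const rl" c] assms by auto
  then show ?thesis using assms by (intro exI[of _ x] exI[of _ y]) auto
qed

text \<open>The upper constant is approached on the sphere \<open>|x| = |y| = r\<^sub>u\<close> as \<open>t \<rightarrow> 0\<close>.\<close>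

lemma upper_const_sharp:
  assumes "CARD('n::finite) \<ge> 2" "0 \<le> rl" "rl \<le> ru" "ru < 1" "0 < ru" "c < upper_const ru"
  shows "\<exists>x y :: real^'n. x \<in> unit_ball \<and> y \<in> unit_ball \<and>
           rl \<le> norm x \<and> norm x \<le> norm y \<and> norm y \<le> ru \<and>
           c * tanh (rho_ball x y / 2) < jstar unit_ball x y"
proof -
  define U where "U = (1 + ru) / 2"
  have cU: "c < U" using assms by (simp add: U_def upper_const_def)
  define t where "t = (if c \<le> 0 then 2 * ru else min (2 * ru) ((1 - ru) * (U - c) / c))"
  have t: "0 < t" "t \<le> 2 * ru" using assms cU by (auto simp: t_def)
  have "c * t \<le> (1 - ru) * (U - c)"
  proof (cases "c \<le> 0")
    case True
    then show ?thesis using assms cU t by (smt (verit) mult_nonneg_nonneg mult_nonpos_nonneg)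
  next
    case False
    then have "c * t \<le> c * ((1 - ru) * (U - c) / c)" by (intro mult_left_mono) (auto simp: t_def)
    then show ?thesis using False by simp
  qed
  then have "c * (t + 2 * (1 - ru)) \<le> (1 - ru) * (U + c)" by (simp add: algebra_simps)
  also have "\<dots> < (1 - ru) * (2 * U)" using assms cU by (intro mult_strict_left_mono) auto
  also have "\<dots> = 1 - ru\<^sup>2" by (simp add: U_def field_simps power2_eq_square)
  finally obtain x y :: "real^'n" where "norm x = ru" "norm y = ru" "x \<in> unit_ball" "y \<in> unit_ball"
      "c * tanh (rho_ball x y / 2) < jstar unit_ball x y"
    using jstar_greater_on_sphere[OF assms(1,5,4) t] by blast
  then show ?thesis using assms by (intro exI[of _ x] exI[of _ y]) auto
qed

theorem theorem3p3:
  fixes rl ru :: real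
  assumes n2: "CARD('n::finite) \<ge> 2"
    and r: "0 \<le> rl" "rl \<le> ru" "ru < 1"
  shows "(\<forall>x y :: real^'n. x \<in> unit_ball \<and> y \<in> unit_ball \<and>
              rl \<le> norm x \<and> norm x \<le> norm y \<and> norm y \<le> ru \<longrightarrow>
            lower_const rl * tanh (rho_ball x y / 2) \<le> jstar unit_ball x y \<and>
            jstar unit_ball x y \<le> upper_const ru * tanh (rho_ball x y / 2))
       \<and> (0 < ru \<longrightarrow>
           (\<forall>c > lower_const rl. \<exists>x y :: real^'n. x \<in> unit_ball \<and> y \<in> unit_ball \<and>
              rl \<le> norm x \<and> norm x \<le> norm y \<and> norm y \<le> ru \<and>
              jstar unit_ball x y < c * tanh (rho_ball x y / 2))
         \<and> (\<forall>c < upper_const ru. \<exists>x y :: real^'n. x \<in> unit_ball \<and> y \<in> unit_ball \<and>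
              rl \<le> norm x \<and> norm x \<le> norm y \<and> norm y \<le> ru \<and>
              c * tanh (rho_ball x y / 2) < jstar unit_ball x y))"
  using jstar_tanh_bounds[OF r(1)] lower_const_sharp[OF n2 r] upper_const_sharp[OF n2 r]
  by blast

end
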